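(* Let $D$ be a division algebra and let $\sigma\in\mathrm{Aut}(D)$ be of infinite inner order. Then the tuple $(\sigma,\sigma^{-1})$ is not automorphically normalizable over $D$.
   Context: All rings are associative with unity. An automorphism $\sigma$ of $D$ has finite inner order if $\sigma^k$ is an inner automorphism $r\mapsto crc^{-1}$ ($c\in D^\times$) for some positive integer $k$; otherwise it has infinite inner order. For commuting automorphisms $\sigma_1,\ldots,\sigma_n$ of $D$, $D[t_1,\ldots,t_n;\sigma_1,\ldots,\sigma_n]$ is the skew polynomial ring in pairwise commuting variables with $t_ia=\sigma_i(a)t_i$ for $a\in D$. For a ring $S\supseteq D$, $a\in S$ is automorphic over $D$ with respect to $\tau$ if $ab=\tau(b)a$ for all $b\in D$. Commuting $a_1,\ldots,a_m\in S$ are (left) algebraically independent over $D$ if monomials in them are left linearly independent over $D$. $S$ is automorphically normalizable over $D$ if there exist $m\ge0$ and commuting $a_1,\ldots,a_m\in S$, automorphic over $D$ with respect to pairwise commuting automorphisms, left algebraically independent over $D$, such that $S$ is finitely generated as a left module over the subring $D[a_1,\ldots,a_m]$ generated by $D\cup\{a_1,\ldots,a_m\}$. A tuple $(\sigma_1,\ldots,\sigma_n)$ is automorphically normalizable over $D$ if every quotient of $D[t_1,\ldots,t_n;\sigma_1,\ldots,\sigma_n]$ by a proper two-sided ideal is automorphically normalizable over $D$. *)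

theory Defs
  imports Main "HOL-Algebra.Algebra"
begin

definition ring_aut :: "('a::division_ring \<Rightarrow> 'a) \<Rightarrow> bool" where
  "ring_aut f \<longleftrightarrow> bij f \<and> (\<forall>x y. f (x + y) = f x + f y) \<and>
     (\<forall>x y. f (x * y) = f x * f y) \<and> f 1 = 1"

definition inner_aut :: "('a::division_ring \<Rightarrow> 'a) \<Rightarrow> bool" where
  "inner_aut f \<longleftrightarrow> (\<exists>c. c \<noteq> 0 \<and> (\<forall>r. f r = c * r * inverse c))"

definition infinite_inner_order :: "('a::division_ring \<Rightarrow> 'a) \<Rightarrow> bool" where
  "infinite_inner_order f \<longleftrightarrow> (\<forall>k::nat. k > 0 \<longrightarrow> \<not> inner_aut (f ^^ k))"

definition exps :: "nat \<Rightarrow> (nat \<Rightarrow> nat) set" where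
  "exps n = {\<alpha>. \<forall>i\<ge>n. \<alpha> i = 0}"

definition sig_pow :: "('a \<Rightarrow> 'a) list \<Rightarrow> (nat \<Rightarrow> nat) \<Rightarrow> 'a \<Rightarrow> 'a" where
  "sig_pow \<sigma>s \<alpha> = foldr (\<lambda>i f. (\<sigma>s ! i ^^ \<alpha> i) \<circ> f) [0..<length \<sigma>s] id"

text \<open>A polynomial is the finitely supported coefficient function p, representing
  the sum of p(alpha) t^alpha with coefficients on the left; the multiplication
  is determined by t^alpha a = sigma^alpha(a) t^alpha and t^alpha t^beta = t^(alpha+beta).\<close>
definition skew_mult ::
  "('a::division_ring \<Rightarrow> 'a) list \<Rightarrow> ((nat \<Rightarrow> nat) \<Rightarrow> 'a) \<Rightarrow> ((nat \<Rightarrow> nat) \<Rightarrow> 'a) \<Rightarrow> (nat \<Rightarrow> nat) \<Rightarrow> 'a" where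
  "skew_mult \<sigma>s p q \<gamma> = (if \<gamma> \<in> exps (length \<sigma>s) then
      (\<Sum>\<alpha>\<in>{\<alpha>. \<alpha> \<le> \<gamma>}. p \<alpha> * sig_pow \<sigma>s \<alpha> (q (\<lambda>i. \<gamma> i - \<alpha> i)))
    else 0)"

definition skew_poly_ring ::
  "('a::division_ring \<Rightarrow> 'a) list \<Rightarrow> ((nat \<Rightarrow> nat) \<Rightarrow> 'a) ring" where
  "skew_poly_ring \<sigma>s = \<lparr>
     carrier = {p. finite {\<alpha>. p \<alpha> \<noteq> 0} \<and> (\<forall>\<alpha>. p \<alpha> \<noteq> 0 \<longrightarrow> \<alpha> \<in> exps (length \<sigma>s))},
     monoid.mult = skew_mult \<sigma>s,
     one = (\<lambda>\<alpha>. if \<alpha> = (\<lambda>_. 0) then 1 else 0),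
     ring.zero = (\<lambda>_. 0),
     ring.add = (\<lambda>p q \<alpha>. p \<alpha> + q \<alpha>) \<rparr>"

definition skew_const :: "'a::division_ring \<Rightarrow> (nat \<Rightarrow> nat) \<Rightarrow> 'a" where
  "skew_const d = (\<lambda>\<alpha>. if \<alpha> = (\<lambda>_. 0) then d else 0)"

definition monom_in :: "('b, 'c) ring_scheme \<Rightarrow> (nat \<Rightarrow> 'b) \<Rightarrow> nat \<Rightarrow> (nat \<Rightarrow> nat) \<Rightarrow> 'b" where
  "monom_in S a m \<beta> = foldr (\<lambda>i acc. (a i [^]\<^bsub>S\<^esub> \<beta> i) \<otimes>\<^bsub>S\<^esub> acc) [0..<m] \<one>\<^bsub>S\<^esub>"

definition automorphic_over :: "('b, 'c) ring_scheme \<Rightarrow> ('a \<Rightarrow> 'b) \<Rightarrow> 'b \<Rightarrow> ('a \<Rightarrow> 'a) \<Rightarrow> bool" where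
  "automorphic_over S \<iota> x \<tau> \<longleftrightarrow> (\<forall>b. x \<otimes>\<^bsub>S\<^esub> \<iota> b = \<iota> (\<tau> b) \<otimes>\<^bsub>S\<^esub> x)"

definition left_alg_indep :: "('b, 'c) ring_scheme \<Rightarrow> ('a::division_ring \<Rightarrow> 'b) \<Rightarrow> nat \<Rightarrow> (nat \<Rightarrow> 'b) \<Rightarrow> bool" where
  "left_alg_indep S \<iota> m a \<longleftrightarrow>
     (\<forall>B c. finite B \<and> B \<subseteq> exps m \<and>
        finsum S (\<lambda>\<beta>. \<iota> (c \<beta>) \<otimes>\<^bsub>S\<^esub> monom_in S a m \<beta>) B = \<zero>\<^bsub>S\<^esub>
        \<longrightarrow> (\<forall>\<beta>\<in>B. c \<beta> = 0))"

definition fin_gen_left_module :: "('b, 'c) ring_scheme \<Rightarrow> 'b set \<Rightarrow> bool" where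
  "fin_gen_left_module S A \<longleftrightarrow>
     (\<exists>G. finite G \<and> G \<subseteq> carrier S \<and>
        (\<forall>s\<in>carrier S. \<exists>c. (\<forall>g\<in>G. c g \<in> A) \<and> s = finsum S (\<lambda>g. c g \<otimes>\<^bsub>S\<^esub> g) G))"

definition aut_normalizable :: "('b, 'c) ring_scheme \<Rightarrow> ('a::division_ring \<Rightarrow> 'b) \<Rightarrow> bool" where
  "aut_normalizable S \<iota> \<longleftrightarrow>
     (\<exists>m a \<tau>. (\<forall>i<m. a i \<in> carrier S) \<and>
        (\<forall>i<m. \<forall>j<m. a i \<otimes>\<^bsub>S\<^esub> a j = a j \<otimes>\<^bsub>S\<^esub> a i) \<and>
        (\<forall>i<m. ring_aut (\<tau> i)) \<and>
        (\<forall>i<m. \<forall>j<m. \<tau> i \<circ> \<tau> j = \<tau> j \<circ> \<tau> i) \<and>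
        (\<forall>i<m. automorphic_over S \<iota> (a i) (\<tau> i)) \<and>
        left_alg_indep S \<iota> m a \<and>
        fin_gen_left_module S (generate_ring S (range \<iota> \<union> a ` {..<m})))"

definition tuple_aut_normalizable :: "('a::division_ring \<Rightarrow> 'a) list \<Rightarrow> bool" where
  "tuple_aut_normalizable \<sigma>s \<longleftrightarrow>
     (\<forall>I. ideal I (skew_poly_ring \<sigma>s) \<and> I \<noteq> carrier (skew_poly_ring \<sigma>s) \<longrightarrow>
        aut_normalizable (skew_poly_ring \<sigma>s Quot I)
          (\<lambda>d. I +>\<^bsub>skew_poly_ring \<sigma>s\<^esub> skew_const d))"

end

theory Submission
  imports Defs
begin

text \<open>
  Sending \<open>t\<^sub>1 \<mapsto> t\<close> and \<open>t\<^sub>2 \<mapsto> t\<^sup>-\<^sup>1\<close> maps \<open>D[t\<^sub>1, t\<^sub>2; \<sigma>, \<sigma>\<^sup>-\<^sup>1]\<close> onto the skew Laurent ring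
  \<open>D[t, t\<^sup>-\<^sup>1; \<sigma>]\<close>, whose kernel is a proper ideal; so it suffices to show that the Laurent ring is
  not automorphically normalizable. If \<open>x b = \<tau>(b) x\<close> for all \<open>b \<in> D\<close>, the coefficients of \<open>x\<close>
  satisfy \<open>c\<^sub>k \<sigma>\<^sup>k(b) = \<tau>(b) c\<^sub>k\<close>, and two nonzero ones in degrees \<open>k < k'\<close> would make
  \<open>\<sigma>\<^bsup>k' - k\<^esup>\<close> inner; hence every automorphic element is a Laurent monomial \<open>c t\<^sup>d\<close>.
  Among the monomials in two such elements there are two different ones of the same degree, and these
  are left dependent over \<open>D\<close>. A single Laurent monomial of degree \<open>d\<close> generates together with \<open>D\<close>
  a ring living in the degrees \<open>\<nat> d\<close>, and a module finitely generated over it lives in the degrees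
  \<open>\<nat> d + [-N, N]\<close> for some \<open>N\<close>, which misses \<open>t\<^sup>-\<^sup>N\<^sup>-\<^sup>1\<close> or \<open>t\<^sup>N\<^sup>+\<^sup>1\<close>.
\<close>

definition ring_endo :: "('a::ring_1 \<Rightarrow> 'a) \<Rightarrow> bool" where
  "ring_endo f \<longleftrightarrow> (\<forall>x y. f (x + y) = f x + f y) \<and> (\<forall>x y. f (x * y) = f x * f y) \<and> f 1 = 1"

lemma ring_endo_add: "ring_endo f \<Longrightarrow> f (x + y) = f x + f y"
  by (simp add: ring_endo_def)

lemma ring_endo_mult: "ring_endo f \<Longrightarrow> f (x * y) = f x * f y"
  by (simp add: ring_endo_def)

lemma ring_endo_one: "ring_endo f \<Longrightarrow> f 1 = 1"
  by (simp add: ring_endo_def)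

lemma ring_endo_zero: "ring_endo f \<Longrightarrow> f 0 = 0"
  using ring_endo_add[of f 0 0] by simp

lemma ring_endo_sum: "ring_endo f \<Longrightarrow> f (sum g A) = (\<Sum>a\<in>A. f (g a))"
  by (induction A rule: infinite_finite_induct) (auto simp: ring_endo_zero ring_endo_add)

lemma ring_endo_id: "ring_endo id"
  by (simp add: ring_endo_def)

lemma ring_endo_comp: "ring_endo f \<Longrightarrow> ring_endo g \<Longrightarrow> ring_endo (f \<circ> g)"
  by (simp add: ring_endo_def)

lemma ring_endo_funpow: "ring_endo f \<Longrightarrow> ring_endo (f ^^ n)"
  by (induction n) (simp_all add: ring_endo_id ring_endo_comp)

lemma ring_endo_inv:
  assumes "bij f" "ring_endo f"
  shows "ring_endo (inv_into UNIV f)"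
proof -
  let ?g = "inv_into UNIV f"
  have "?g (f x) = x" for x
    using assms(1) by (simp add: bij_is_inj)
  moreover have "f (?g y) = y" for y
    using assms(1) by (simp add: bij_is_surj f_inv_into_f)
  ultimately show ?thesis
    unfolding ring_endo_def
    by (metis ring_endo_add[OF assms(2)] ring_endo_mult[OF assms(2)] ring_endo_one[OF assms(2)])
qed

lemma nat_combinations_collide:
  fixes d0 d1 :: int
  obtains u v u' v' :: nat
  where "(u, v) \<noteq> (u', v')" "int u * d0 + int v * d1 = int u' * d0 + int v' * d1"
proof (cases "d0 = 0")
  case True
  then show ?thesis
    using that[of 1 0 0 0] by simp
next
  case False
  show ?thesis
  proof (cases "d0 * d1 \<le> 0")
    case True
    then have "\<bar>d1\<bar> * d0 + \<bar>d0\<bar> * d1 = 0"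
      by (simp add: abs_if mult_le_0_iff) arith
    then show ?thesis
      using that[of "nat \<bar>d1\<bar>" "nat \<bar>d0\<bar>" 0 0] \<open>d0 \<noteq> 0\<close> by simp
  next
    case False
    then have "\<bar>d1\<bar> * d0 = \<bar>d0\<bar> * d1"
      by (simp add: abs_if mult_le_0_iff) arith
    then show ?thesis
      using that[of "nat \<bar>d1\<bar>" 0 0 "nat \<bar>d0\<bar>"] \<open>d0 \<noteq> 0\<close> by simp
  qed
qed

lemma nat_multiples_plus_interval_miss:
  fixes e N :: int
  obtains k where "k \<notin> {j + i | j i. j \<in> range (\<lambda>u::nat. int u * e) \<and> i \<in> {- N..N}}"
proof
  let ?k = "if 0 \<le> e then - (N + 1) else N + 1"
  show "?k \<notin> {j + i | j i. j \<in> range (\<lambda>u::nat. int u * e) \<and> i \<in> {- N..N}}"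
  proof
    assume "?k \<in> {j + i | j i. j \<in> range (\<lambda>u::nat. int u * e) \<and> i \<in> {- N..N}}"
    then obtain u i where u: "?k = int u * e + i" "- N \<le> i" "i \<le> N"
      by auto
    show False
    proof (cases "0 \<le> e")
      case True
      then have "0 \<le> int u * e" by simp
      with True u show False by simp
    next
      case False
      then have "int u * e \<le> 0" by (simp add: mult_nonneg_nonpos)
      with False u show False by simp
    qed
  qed
qed

lemma fin_gen_left_module_mono:
  assumes "A \<subseteq> B" and "fin_gen_left_module S A"
  shows "fin_gen_left_module S B"
proof -
  obtain G where "finite G" "G \<subseteq> carrier S"
    and span: "\<forall>s\<in>carrier S. \<exists>c. (\<forall>g\<in>G. c g \<in> A) \<and> s = finsum S (\<lambda>g. c g \<otimes>\<^bsub>S\<^esub> g) G"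
    using assms(2) unfolding fin_gen_left_module_def by blast
  moreover have "\<forall>s\<in>carrier S. \<exists>c. (\<forall>g\<in>G. c g \<in> B) \<and> s = finsum S (\<lambda>g. c g \<otimes>\<^bsub>S\<^esub> g) G"
    using span assms(1) by blast
  ultimately show ?thesis
    unfolding fin_gen_left_module_def by blast
qed

lemma (in abelian_monoid) finsum_closed_subset:
  assumes "finite A" "f \<in> A \<rightarrow> H" "H \<subseteq> carrier G" "\<zero> \<in> H"
    and "\<And>x y. x \<in> H \<Longrightarrow> y \<in> H \<Longrightarrow> x \<oplus> y \<in> H"
  shows "finsum G f A \<in> H"
  using assms(1,2)
proof (induction A rule: finite_induct)
  case (insert x A)
  then have "f \<in> A \<rightarrow> carrier G" "f x \<in> carrier G"
    using assms(3) by auto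
  with insert show ?case
    using assms(5) by (simp add: finsum_insert)
qed (simp add: assms(4))

lemma finite_le_exps:
  assumes "\<gamma> \<in> exps n"
  shows "finite {\<alpha>. \<alpha> \<le> \<gamma>}"
proof -
  have "inj_on (\<lambda>\<alpha>. restrict \<alpha> {..<n}) {\<alpha>. \<alpha> \<le> \<gamma>}"
  proof (rule inj_onI)
    fix \<alpha> \<beta> assume "\<alpha> \<in> {\<alpha>. \<alpha> \<le> \<gamma>}" and "\<beta> \<in> {\<alpha>. \<alpha> \<le> \<gamma>}"
      and eq: "restrict \<alpha> {..<n} = restrict \<beta> {..<n}"
    show "\<alpha> = \<beta>"
    proof
      fix i
      show "\<alpha> i = \<beta> i"
      proof (cases "i < n")
        case True
        then show ?thesis using fun_cong[OF eq, of i] by simp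
      next
        case False
        then show ?thesis
          using assms \<open>\<alpha> \<in> {\<alpha>. \<alpha> \<le> \<gamma>}\<close> \<open>\<beta> \<in> {\<alpha>. \<alpha> \<le> \<gamma>}\<close> by (simp add: exps_def le_fun_def) (metis le_zero_eq not_less)
      qed
    qed
  qed
  moreover have "(\<lambda>\<alpha>. restrict \<alpha> {..<n}) ` {\<alpha>. \<alpha> \<le> \<gamma>} \<subseteq> PiE {..<n} (\<lambda>i. {..\<gamma> i})"
    by (intro image_subsetI) (auto simp: le_fun_def restrict_PiE_iff)
  then have "finite ((\<lambda>\<alpha>. restrict \<alpha> {..<n}) ` {\<alpha>. \<alpha> \<le> \<gamma>})"
    by (rule finite_subset) (simp add: finite_PiE)
  ultimately show ?thesis
    using finite_image_iff by blast
qed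

lemma exps_le: "\<gamma> \<in> exps n \<Longrightarrow> \<alpha> \<le> \<gamma> \<Longrightarrow> \<alpha> \<in> exps n"
  by (simp add: exps_def le_fun_def) (metis le_zero_eq)

lemma exps_diff: "\<gamma> \<in> exps n \<Longrightarrow> (\<lambda>i. \<gamma> i - \<alpha> i) \<in> exps n"
  by (simp add: exps_def)

lemma exps_add: "\<alpha> \<in> exps n \<Longrightarrow> \<beta> \<in> exps n \<Longrightarrow> (\<lambda>i. \<alpha> i + \<beta> i) \<in> exps n"
  by (simp add: exps_def)

lemma zero_in_exps: "(\<lambda>_. 0) \<in> exps n"
  by (simp add: exps_def)

lemma sum_le_shift:
  fixes \<beta> \<gamma> :: "nat \<Rightarrow> nat"
  assumes "\<beta> \<le> \<gamma>"
  shows "(\<Sum>\<alpha> | \<alpha> \<le> \<gamma> \<and> \<beta> \<le> \<alpha>. f \<alpha>) = (\<Sum>\<delta> | \<delta> \<le> (\<lambda>i. \<gamma> i - \<beta> i). f (\<lambda>i. \<beta> i + \<delta> i))"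
proof (rule sum.reindex_bij_witness[of _ "\<lambda>\<delta> i. \<beta> i + \<delta> i" "\<lambda>\<alpha> i. \<alpha> i - \<beta> i"])
  fix \<delta> assume "\<delta> \<in> {\<delta>. \<delta> \<le> (\<lambda>i. \<gamma> i - \<beta> i)}"
  then have "\<delta> i + \<beta> i \<le> \<gamma> i" for i
    using assms le_diff_conv2[of "\<beta> i" "\<gamma> i" "\<delta> i"] by (simp add: le_fun_def)
  then show "(\<lambda>i. \<beta> i + \<delta> i) \<in> {\<alpha>. \<alpha> \<le> \<gamma> \<and> \<beta> \<le> \<alpha>}"
    by (simp add: le_fun_def add.commute)
qed (auto simp: le_fun_def intro: diff_le_mono)

definition tdeg :: "(nat \<Rightarrow> nat) \<Rightarrow> int" where
  "tdeg \<alpha> = int (\<alpha> 0) - int (\<alpha> 1)"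

definition exp_of_tdeg :: "int \<Rightarrow> nat \<Rightarrow> nat" where
  "exp_of_tdeg k = (\<lambda>i. if i = 0 then nat k else if i = 1 then nat (- k) else 0)"

lemma tdeg_zero [simp]: "tdeg (\<lambda>_. 0) = 0"
  by (simp add: tdeg_def)

lemma tdeg_add: "tdeg (\<lambda>i. \<alpha> i + \<beta> i) = tdeg \<alpha> + tdeg \<beta>"
  by (simp add: tdeg_def)

lemma tdeg_diff: "\<alpha> \<le> \<gamma> \<Longrightarrow> tdeg (\<lambda>i. \<gamma> i - \<alpha> i) = tdeg \<gamma> - tdeg \<alpha>"
  by (simp add: tdeg_def le_fun_def of_nat_diff)

lemma exp_of_tdeg_in_exps: "exp_of_tdeg k \<in> exps 2"
  by (simp add: exp_of_tdeg_def exps_def)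

lemma tdeg_exp_of_tdeg [simp]: "tdeg (exp_of_tdeg k) = k"
  by (simp add: exp_of_tdeg_def tdeg_def)

definition polys :: "((nat \<Rightarrow> nat) \<Rightarrow> 'a::zero) set" where
  "polys = {p. finite {\<alpha>. p \<alpha> \<noteq> 0} \<and> (\<forall>\<alpha>. p \<alpha> \<noteq> 0 \<longrightarrow> \<alpha> \<in> exps 2)}"

definition monomial :: "'a::zero \<Rightarrow> (nat \<Rightarrow> nat) \<Rightarrow> (nat \<Rightarrow> nat) \<Rightarrow> 'a" where
  "monomial c \<alpha> = (\<lambda>\<gamma>. if \<gamma> = \<alpha> then c else 0)"

lemma polys_finite_support: "p \<in> polys \<Longrightarrow> finite {\<alpha>. p \<alpha> \<noteq> 0}"
  by (simp add: polys_def)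

lemma polys_support_exps: "p \<in> polys \<Longrightarrow> p \<alpha> \<noteq> 0 \<Longrightarrow> \<alpha> \<in> exps 2"
  by (simp add: polys_def)

lemma zero_in_polys: "(\<lambda>_. 0) \<in> polys"
  by (simp add: polys_def)

lemma monomial_in_polys: "\<alpha> \<in> exps 2 \<Longrightarrow> monomial c \<alpha> \<in> polys"
  by (auto simp: polys_def monomial_def)

lemma skew_const_eq_monomial: "skew_const c = monomial c (\<lambda>_. 0)"
  by (simp add: skew_const_def monomial_def)

lemma monomial_0 [simp]: "monomial 0 \<alpha> = (\<lambda>_. 0)"
  by (simp add: monomial_def fun_eq_iff)

lemma polys_add: "p \<in> polys \<Longrightarrow> q \<in> polys \<Longrightarrow> (\<lambda>\<alpha>. p \<alpha> + q \<alpha>) \<in> polys"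
  for p q :: "(nat \<Rightarrow> nat) \<Rightarrow> 'a::monoid_add"
proof -
  assume "p \<in> polys" "q \<in> polys"
  moreover have "{\<alpha>. p \<alpha> + q \<alpha> \<noteq> 0} \<subseteq> {\<alpha>. p \<alpha> \<noteq> 0} \<union> {\<alpha>. q \<alpha> \<noteq> 0}" by auto
  ultimately show ?thesis
    unfolding polys_def by (auto intro: finite_subset)
qed

lemma polys_uminus: "p \<in> polys \<Longrightarrow> (\<lambda>\<alpha>. - p \<alpha>) \<in> polys"
  for p :: "(nat \<Rightarrow> nat) \<Rightarrow> 'a::group_add"
  by (simp add: polys_def)

lemma polys_sum:
  "finite F \<Longrightarrow> (\<And>x. x \<in> F \<Longrightarrow> f x \<in> polys) \<Longrightarrow> (\<lambda>\<gamma>. \<Sum>x\<in>F. f x \<gamma>) \<in> polys"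
  for f :: "'b \<Rightarrow> (nat \<Rightarrow> nat) \<Rightarrow> 'a::comm_monoid_add"
  by (induction F rule: finite_induct) (simp_all add: zero_in_polys polys_add)

lemma sum_monomials: "p \<in> polys \<Longrightarrow> (\<lambda>\<gamma>. \<Sum>\<alpha> | p \<alpha> \<noteq> 0. monomial (p \<alpha>) \<alpha> \<gamma>) = p"
  by (auto simp: monomial_def polys_finite_support sum.delta)

definition tdeg_support :: "((nat \<Rightarrow> nat) \<Rightarrow> 'a::zero) \<Rightarrow> int set" where
  "tdeg_support p = tdeg ` {\<alpha>. p \<alpha> \<noteq> 0}"

text \<open>The coefficient of \<open>t\<^sup>k\<close> in the image of \<open>p\<close> under \<open>t\<^sub>1 \<mapsto> t\<close>, \<open>t\<^sub>2 \<mapsto> t\<^sup>-\<^sup>1\<close>.\<close>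

definition laurent_coeff :: "((nat \<Rightarrow> nat) \<Rightarrow> 'a::comm_monoid_add) \<Rightarrow> int \<Rightarrow> 'a" where
  "laurent_coeff p k = (\<Sum>\<alpha> | p \<alpha> \<noteq> 0 \<and> tdeg \<alpha> = k. p \<alpha>)"

lemma laurent_coeff_eq_sum:
  assumes "finite F" "{\<alpha>. p \<alpha> \<noteq> 0} \<subseteq> F"
  shows "laurent_coeff p k = (\<Sum>\<alpha> | \<alpha> \<in> F \<and> tdeg \<alpha> = k. p \<alpha>)"
  unfolding laurent_coeff_def
  by (rule sum.mono_neutral_left) (use assms in \<open>auto intro: finite_subset\<close>)

lemma laurent_coeff_eq_0: "k \<notin> tdeg_support p \<Longrightarrow> laurent_coeff p k = 0"
  by (auto simp: laurent_coeff_def tdeg_support_def intro: sum.neutral)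

lemma laurent_coeff_zero [simp]: "laurent_coeff (\<lambda>_. 0) k = 0"
  by (simp add: laurent_coeff_def)

lemma laurent_coeff_monomial: "laurent_coeff (monomial c \<alpha>) k = (if tdeg \<alpha> = k then c else 0)"
proof -
  have "laurent_coeff (monomial c \<alpha>) k = (\<Sum>\<gamma> | \<gamma> \<in> {\<alpha>} \<and> tdeg \<gamma> = k. monomial c \<alpha> \<gamma>)"
    by (rule laurent_coeff_eq_sum) (auto simp: monomial_def)
  moreover have "{\<gamma>. \<gamma> \<in> {\<alpha>} \<and> tdeg \<gamma> = k} = (if tdeg \<alpha> = k then {\<alpha>} else {})"
    by auto
  ultimately show ?thesis
    by (simp add: monomial_def)
qed

lemma laurent_coeff_add:
  assumes "p \<in> polys" "q \<in> polys"
  shows "laurent_coeff (\<lambda>\<alpha>. p \<alpha> + q \<alpha>) k = laurent_coeff p k + laurent_coeff q k"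
proof -
  define F where "F = {\<alpha>. p \<alpha> \<noteq> 0} \<union> {\<alpha>. q \<alpha> \<noteq> 0}"
  have F: "finite F"
    using assms by (simp add: F_def polys_finite_support)
  have "laurent_coeff (\<lambda>\<alpha>. p \<alpha> + q \<alpha>) k = (\<Sum>\<alpha> | \<alpha> \<in> F \<and> tdeg \<alpha> = k. p \<alpha> + q \<alpha>)"
    by (rule laurent_coeff_eq_sum[OF F]) (auto simp: F_def)
  also have "\<dots> = laurent_coeff p k + laurent_coeff q k"
    by (simp add: sum.distrib laurent_coeff_eq_sum[OF F, of p] laurent_coeff_eq_sum[OF F, of q] F_def)
  finally show ?thesis .
qed

lemma laurent_coeff_uminus: "laurent_coeff (\<lambda>\<alpha>. - p \<alpha>) k = - laurent_coeff p k"
  for p :: "(nat \<Rightarrow> nat) \<Rightarrow> 'a::ab_group_add"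
  by (simp add: laurent_coeff_def sum_negf)

lemma laurent_coeff_sum:
  "finite F \<Longrightarrow> (\<And>x. x \<in> F \<Longrightarrow> f x \<in> polys) \<Longrightarrow>
    laurent_coeff (\<lambda>\<gamma>. \<Sum>x\<in>F. f x \<gamma>) k = (\<Sum>x\<in>F. laurent_coeff (f x) k)"
  by (induction F rule: finite_induct) (simp_all add: laurent_coeff_add polys_sum)

definition laurent_kernel :: "((nat \<Rightarrow> nat) \<Rightarrow> 'a::comm_monoid_add) set" where
  "laurent_kernel = {p \<in> polys. \<forall>k. laurent_coeff p k = 0}"

section \<open>The skew polynomial ring \<open>D[t\<^sub>1, t\<^sub>2; \<sigma>, \<sigma>\<^sup>-\<^sup>1]\<close>\<close>

locale ring_automorphism =
  fixes \<sigma> :: "'a::division_ring \<Rightarrow> 'a"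
  assumes aut: "ring_aut \<sigma>"
begin

lemma bij_aut: "bij \<sigma>"
  using aut by (simp add: ring_aut_def)

lemma ring_endo_aut: "ring_endo \<sigma>"
  using aut by (simp add: ring_aut_def ring_endo_def)

definition aut_pow :: "int \<Rightarrow> 'a \<Rightarrow> 'a" where
  "aut_pow k = (if 0 \<le> k then \<sigma> ^^ nat k else inv_into UNIV \<sigma> ^^ nat (- k))"

lemma aut_pow_0: "aut_pow 0 = id"
  by (simp add: aut_pow_def)

lemma aut_pow_of_nat: "aut_pow (int n) = \<sigma> ^^ n"
  by (simp add: aut_pow_def)

lemma aut_pow_minus_of_nat: "aut_pow (- int n) = inv_into UNIV \<sigma> ^^ n"
proof (cases n)
  case (Suc m)
  then have "nat (int m + 1) = Suc m" by simp
  with Suc show ?thesis by (simp add: aut_pow_def del: funpow.simps)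
qed (simp add: aut_pow_def)

lemma aut_pow_Suc: "aut_pow (k + 1) = \<sigma> \<circ> aut_pow k"
proof (cases "0 \<le> k")
  case True
  then have "nat (k + 1) = Suc (nat k)" by simp
  with True show ?thesis by (simp add: aut_pow_def)
next
  case False
  define n where "n = nat (- k - 1)"
  have n: "k = - int (Suc n)"
    using False by (simp add: n_def)
  have "\<sigma> \<circ> inv_into UNIV \<sigma> = id"
    using bij_aut by (intro ext) (simp add: bij_is_surj f_inv_into_f)
  then have "\<sigma> \<circ> (inv_into UNIV \<sigma> \<circ> inv_into UNIV \<sigma> ^^ n) = inv_into UNIV \<sigma> ^^ n"
    by (simp add: o_assoc)
  moreover have "k + 1 = - int n" using n by simp
  ultimately show ?thesis
    using n by (simp only: aut_pow_minus_of_nat funpow.simps(2))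
qed

lemma aut_pow_add: "aut_pow (i + j) = aut_pow i \<circ> aut_pow j"
proof (induction i rule: int_induct[where k = 0])
  case base
  then show ?case by (simp add: aut_pow_0)
next
  case (step1 i)
  have "aut_pow (i + 1 + j) = \<sigma> \<circ> aut_pow (i + j)"
    using aut_pow_Suc[of "i + j"] by (simp add: ac_simps)
  with step1 show ?case by (simp add: aut_pow_Suc o_assoc)
next
  case (step2 i)
  have "aut_pow (i + j) = \<sigma> \<circ> aut_pow (i - 1 + j)" "aut_pow i = \<sigma> \<circ> aut_pow (i - 1)"
    using aut_pow_Suc[of "i - 1 + j"] aut_pow_Suc[of "i - 1"] by simp_all
  with step2 have "\<sigma> \<circ> aut_pow (i - 1 + j) = \<sigma> \<circ> (aut_pow (i - 1) \<circ> aut_pow j)"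
    by (simp add: fun_eq_iff)
  then show ?case
    using bij_is_inj[OF bij_aut] by (auto simp: fun_eq_iff dest: injD)
qed

lemma aut_pow_ring_endo: "ring_endo (aut_pow k)"
  using bij_aut ring_endo_aut by (simp add: aut_pow_def ring_endo_funpow ring_endo_inv)

abbreviation skew_ring :: "((nat \<Rightarrow> nat) \<Rightarrow> 'a) ring" where
  "skew_ring \<equiv> skew_poly_ring [\<sigma>, inv_into UNIV \<sigma>]"

abbreviation pmul :: "((nat \<Rightarrow> nat) \<Rightarrow> 'a) \<Rightarrow> ((nat \<Rightarrow> nat) \<Rightarrow> 'a) \<Rightarrow> (nat \<Rightarrow> nat) \<Rightarrow> 'a" where
  "pmul \<equiv> skew_mult [\<sigma>, inv_into UNIV \<sigma>]"

lemma sig_pow_eq_aut_pow: "sig_pow [\<sigma>, inv_into UNIV \<sigma>] \<alpha> = aut_pow (tdeg \<alpha>)"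
proof -
  have "sig_pow [\<sigma>, inv_into UNIV \<sigma>] \<alpha> = (\<sigma> ^^ \<alpha> 0) \<circ> (inv_into UNIV \<sigma> ^^ \<alpha> 1)"
    by (simp add: sig_pow_def upt_rec)
  also have "\<dots> = aut_pow (int (\<alpha> 0)) \<circ> aut_pow (- int (\<alpha> 1))"
    by (simp add: aut_pow_of_nat aut_pow_minus_of_nat)
  also have "\<dots> = aut_pow (tdeg \<alpha>)"
    by (simp add: aut_pow_add [symmetric] tdeg_def)
  finally show ?thesis .
qed

lemma pmul_eq: "pmul p q \<gamma> = (if \<gamma> \<in> exps 2 then
    (\<Sum>\<alpha> | \<alpha> \<le> \<gamma>. p \<alpha> * aut_pow (tdeg \<alpha>) (q (\<lambda>i. \<gamma> i - \<alpha> i))) else 0)"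
  by (simp add: skew_mult_def sig_pow_eq_aut_pow numeral_2_eq_2)

lemma pmul_assoc: "pmul (pmul p q) r = pmul p (pmul q r)"
proof
  fix \<gamma>
  show "pmul (pmul p q) r \<gamma> = pmul p (pmul q r) \<gamma>"
  proof (cases "\<gamma> \<in> exps 2")
    case False
    then show ?thesis by (simp add: pmul_eq)
  next
    case True
    note fin = finite_le_exps[OF True]
    define F where "F \<beta> \<alpha> = p \<beta> * aut_pow (tdeg \<beta>) (q (\<lambda>i. \<alpha> i - \<beta> i)) *
      aut_pow (tdeg \<alpha>) (r (\<lambda>i. \<gamma> i - \<alpha> i))" for \<beta> \<alpha>
    have "pmul (pmul p q) r \<gamma> = (\<Sum>\<alpha> | \<alpha> \<le> \<gamma>. \<Sum>\<beta> | \<beta> \<le> \<alpha>. F \<beta> \<alpha>)"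
      using True by (auto simp: pmul_eq F_def sum_distrib_right exps_le intro!: sum.cong)
    also have "\<dots> = (\<Sum>\<alpha> | \<alpha> \<le> \<gamma>. \<Sum>\<beta> | \<beta> \<in> {\<beta>. \<beta> \<le> \<gamma>} \<and> \<beta> \<le> \<alpha>. F \<beta> \<alpha>)"
      by (intro sum.cong refl) (auto intro: order_trans)
    also have "\<dots> = (\<Sum>\<beta> | \<beta> \<le> \<gamma>. \<Sum>\<alpha> | \<alpha> \<in> {\<alpha>. \<alpha> \<le> \<gamma>} \<and> \<beta> \<le> \<alpha>. F \<beta> \<alpha>)"
      by (rule sum.swap_restrict[OF fin fin])
    also have "\<dots> = (\<Sum>\<beta> | \<beta> \<le> \<gamma>. \<Sum>\<delta> | \<delta> \<le> (\<lambda>i. \<gamma> i - \<beta> i). F \<beta> (\<lambda>i. \<beta> i + \<delta> i))"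
      by (rule sum.cong[OF refl]) (simp add: sum_le_shift)
    also have "\<dots> = (\<Sum>\<beta> | \<beta> \<le> \<gamma>. p \<beta> * aut_pow (tdeg \<beta>) (\<Sum>\<delta> | \<delta> \<le> (\<lambda>i. \<gamma> i - \<beta> i).
        q \<delta> * aut_pow (tdeg \<delta>) (r (\<lambda>i. \<gamma> i - \<beta> i - \<delta> i))))"
      by (simp add: F_def diff_diff_left tdeg_add aut_pow_add ring_endo_sum[OF aut_pow_ring_endo]
          ring_endo_mult[OF aut_pow_ring_endo] sum_distrib_left mult.assoc)
    also have "\<dots> = pmul p (pmul q r) \<gamma>"
      using True by (simp add: pmul_eq exps_diff)
    finally show ?thesis .
  qed
qed

lemma pmul_monomial_left: "pmul (monomial c \<alpha>) q \<gamma> =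
    (if \<gamma> \<in> exps 2 \<and> \<alpha> \<le> \<gamma> then c * aut_pow (tdeg \<alpha>) (q (\<lambda>i. \<gamma> i - \<alpha> i)) else 0)"
proof (cases "\<gamma> \<in> exps 2")
  case True
  have "pmul (monomial c \<alpha>) q \<gamma> = (\<Sum>\<alpha>' | \<alpha>' \<le> \<gamma>.
      if \<alpha>' = \<alpha> then c * aut_pow (tdeg \<alpha>) (q (\<lambda>i. \<gamma> i - \<alpha> i)) else 0)"
    using True by (auto simp: pmul_eq monomial_def intro!: sum.cong)
  then show ?thesis
    using True by (simp add: sum.delta[OF finite_le_exps[OF True]])
qed (simp add: pmul_eq)

lemma pmul_monomial_monomial:
  assumes "\<alpha> \<in> exps 2" "\<beta> \<in> exps 2"
  shows "pmul (monomial x \<alpha>) (monomial y \<beta>) = monomial (x * aut_pow (tdeg \<alpha>) y) (\<lambda>i. \<alpha> i + \<beta> i)"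
proof
  fix \<gamma>
  have shift: "(\<lambda>i. \<gamma> i - \<alpha> i) = \<beta> \<longleftrightarrow> \<gamma> = (\<lambda>i. \<alpha> i + \<beta> i)" if "\<alpha> \<le> \<gamma>"
    using that by (auto simp: le_fun_def fun_eq_iff) (metis le_add_diff_inverse)
  have "pmul (monomial x \<alpha>) (monomial y \<beta>) \<gamma> = (if \<gamma> \<in> exps 2 \<and> \<alpha> \<le> \<gamma>
      then x * aut_pow (tdeg \<alpha>) (monomial y \<beta> (\<lambda>i. \<gamma> i - \<alpha> i)) else 0)"
    by (rule pmul_monomial_left)
  then show "pmul (monomial x \<alpha>) (monomial y \<beta>) \<gamma> = monomial (x * aut_pow (tdeg \<alpha>) y) (\<lambda>i. \<alpha> i + \<beta> i) \<gamma>"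
    using assms shift by (auto simp: monomial_def le_fun_def exps_add ring_endo_zero[OF aut_pow_ring_endo])
qed

lemma pmul_support:
  assumes "pmul p q \<gamma> \<noteq> 0"
  obtains \<alpha> where "\<gamma> \<in> exps 2" "\<alpha> \<le> \<gamma>" "p \<alpha> \<noteq> 0" "q (\<lambda>i. \<gamma> i - \<alpha> i) \<noteq> 0"
proof -
  have \<gamma>: "\<gamma> \<in> exps 2"
    using assms by (rule contrapos_np) (simp add: pmul_eq)
  with assms have "(\<Sum>\<alpha> | \<alpha> \<le> \<gamma>. p \<alpha> * aut_pow (tdeg \<alpha>) (q (\<lambda>i. \<gamma> i - \<alpha> i))) \<noteq> 0"
    by (simp add: pmul_eq)
  then obtain \<alpha> where "\<alpha> \<le> \<gamma>" "p \<alpha> * aut_pow (tdeg \<alpha>) (q (\<lambda>i. \<gamma> i - \<alpha> i)) \<noteq> 0"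
    by (rule sum.not_neutral_contains_not_neutral) simp
  moreover have "aut_pow (tdeg \<alpha>) 0 = 0"
    by (rule ring_endo_zero[OF aut_pow_ring_endo])
  ultimately show ?thesis
    using that \<gamma> by (metis mult_zero_left mult_zero_right)
qed

lemma tdeg_support_pmul:
  "tdeg_support (pmul p q) \<subseteq> {j + k | j k. j \<in> tdeg_support p \<and> k \<in> tdeg_support q}"
proof
  fix k assume "k \<in> tdeg_support (pmul p q)"
  then obtain \<gamma> where \<gamma>: "pmul p q \<gamma> \<noteq> 0" "k = tdeg \<gamma>"
    by (auto simp: tdeg_support_def)
  then obtain \<alpha> where \<alpha>: "\<alpha> \<le> \<gamma>" "p \<alpha> \<noteq> 0" "q (\<lambda>i. \<gamma> i - \<alpha> i) \<noteq> 0"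
    by (auto elim: pmul_support)
  then have "tdeg \<alpha> \<in> tdeg_support p" "tdeg (\<lambda>i. \<gamma> i - \<alpha> i) \<in> tdeg_support q"
    by (simp_all add: tdeg_support_def)
  moreover have "k = tdeg \<alpha> + tdeg (\<lambda>i. \<gamma> i - \<alpha> i)"
    using \<gamma>(2) tdeg_diff[OF \<alpha>(1)] by simp
  ultimately show "k \<in> {j + k | j k. j \<in> tdeg_support p \<and> k \<in> tdeg_support q}"
    by blast
qed

lemma polys_pmul:
  assumes "p \<in> polys" "q \<in> polys"
  shows "pmul p q \<in> polys"
proof -
  have "{\<gamma>. pmul p q \<gamma> \<noteq> 0} \<subseteq> (\<lambda>(\<alpha>, \<beta>) i. \<alpha> i + \<beta> i) ` ({\<alpha>. p \<alpha> \<noteq> 0} \<times> {\<beta>. q \<beta> \<noteq> 0})"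
  proof
    fix \<gamma> assume "\<gamma> \<in> {\<gamma>. pmul p q \<gamma> \<noteq> 0}"
    then obtain \<alpha> where \<alpha>: "\<alpha> \<le> \<gamma>" "p \<alpha> \<noteq> 0" "q (\<lambda>i. \<gamma> i - \<alpha> i) \<noteq> 0"
      by (auto elim: pmul_support)
    then have "\<gamma> = (\<lambda>i. \<alpha> i + (\<gamma> i - \<alpha> i))"
      by (auto simp: le_fun_def)
    with \<alpha> show "\<gamma> \<in> (\<lambda>(\<alpha>, \<beta>) i. \<alpha> i + \<beta> i) ` ({\<alpha>. p \<alpha> \<noteq> 0} \<times> {\<beta>. q \<beta> \<noteq> 0})"
      by (intro image_eqI[where x = "(\<alpha>, \<lambda>i. \<gamma> i - \<alpha> i)"]) auto
  qed
  moreover have "finite ((\<lambda>(\<alpha>, \<beta>) i. \<alpha> i + \<beta> i) ` ({\<alpha>. p \<alpha> \<noteq> 0} \<times> {\<beta>. q \<beta> \<noteq> 0}))"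
    using assms by (simp add: polys_finite_support)
  ultimately show ?thesis
    by (auto simp: polys_def intro: finite_subset elim: pmul_support)
qed

lemma pmul_one_left: "q \<in> polys \<Longrightarrow> pmul (monomial 1 (\<lambda>_. 0)) q = q"
  by (rule ext) (auto simp: pmul_monomial_left aut_pow_0 le_fun_def polys_def)

lemma pmul_one_right: "p \<in> polys \<Longrightarrow> pmul p (monomial 1 (\<lambda>_. 0)) = p"
proof
  fix \<gamma> assume p: "p \<in> polys"
  have "(\<lambda>i. \<gamma> i - \<alpha> i) = (\<lambda>_. 0) \<longleftrightarrow> \<alpha> = \<gamma>" if "\<alpha> \<le> \<gamma>" for \<alpha> :: "nat \<Rightarrow> nat"
    using that by (auto simp: le_fun_def fun_eq_iff intro: antisym)
  then have "pmul p (monomial 1 (\<lambda>_. 0)) \<gamma> = (if \<gamma> \<in> exps 2 then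
      (\<Sum>\<alpha> | \<alpha> \<le> \<gamma>. if \<alpha> = \<gamma> then p \<alpha> else 0) else 0)"
    by (auto simp: pmul_eq monomial_def ring_endo_zero[OF aut_pow_ring_endo]
        ring_endo_one[OF aut_pow_ring_endo] intro!: sum.cong)
  then show "pmul p (monomial 1 (\<lambda>_. 0)) \<gamma> = p \<gamma>"
    using p by (auto simp: finite_le_exps polys_def)
qed

lemma pmul_add_left: "pmul (\<lambda>\<alpha>. p \<alpha> + q \<alpha>) r = (\<lambda>\<alpha>. pmul p r \<alpha> + pmul q r \<alpha>)"
  by (rule ext) (simp add: pmul_eq distrib_right sum.distrib)

lemma pmul_add_right: "pmul r (\<lambda>\<alpha>. p \<alpha> + q \<alpha>) = (\<lambda>\<alpha>. pmul r p \<alpha> + pmul r q \<alpha>)"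
  by (rule ext) (simp add: pmul_eq distrib_left sum.distrib ring_endo_add[OF aut_pow_ring_endo])

lemma pmul_sum_left: "pmul (\<lambda>\<gamma>. \<Sum>x\<in>F. f x \<gamma>) r = (\<lambda>\<gamma>. \<Sum>x\<in>F. pmul (f x) r \<gamma>)"
proof (induction F rule: infinite_finite_induct)
  case (insert x F)
  then show ?case by (simp add: pmul_add_left)
qed (simp_all add: pmul_eq fun_eq_iff)

lemma skew_ring_carrier: "carrier skew_ring = polys"
  by (simp add: skew_poly_ring_def polys_def numeral_2_eq_2)

lemma skew_ring_simps:
  "x \<otimes>\<^bsub>skew_ring\<^esub> y = pmul x y"
  "x \<oplus>\<^bsub>skew_ring\<^esub> y = (\<lambda>\<alpha>. x \<alpha> + y \<alpha>)"
  "\<one>\<^bsub>skew_ring\<^esub> = monomial 1 (\<lambda>_. 0)"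
  "\<zero>\<^bsub>skew_ring\<^esub> = (\<lambda>_. 0)"
  by (simp_all add: skew_poly_ring_def monomial_def)

lemma skew_ring_is_ring: "ring skew_ring"
proof (rule ringI)
  show "abelian_group skew_ring"
  proof (rule abelian_groupI)
    fix x assume "x \<in> carrier skew_ring"
    then have "(\<lambda>\<alpha>. - x \<alpha>) \<in> carrier skew_ring" "(\<lambda>\<alpha>. - x \<alpha>) \<oplus>\<^bsub>skew_ring\<^esub> x = \<zero>\<^bsub>skew_ring\<^esub>"
      by (simp_all add: skew_ring_carrier skew_ring_simps polys_uminus)
    then show "\<exists>y\<in>carrier skew_ring. y \<oplus>\<^bsub>skew_ring\<^esub> x = \<zero>\<^bsub>skew_ring\<^esub>"
      by blast
  qed (auto simp: skew_ring_carrier skew_ring_simps polys_add zero_in_polys add.assoc add.commute)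
  show "monoid skew_ring"
    by (rule monoidI) (auto simp: skew_ring_carrier skew_ring_simps polys_pmul monomial_in_polys
        zero_in_exps pmul_assoc pmul_one_left pmul_one_right)
qed (simp_all add: skew_ring_simps pmul_add_left pmul_add_right)

section \<open>The skew Laurent ring as a quotient\<close>

lemma pmul_monomial_left_shift:
  assumes "\<alpha> \<in> exps 2" "\<beta> \<in> exps 2"
  shows "pmul (monomial c \<alpha>) p (\<lambda>i. \<alpha> i + \<beta> i) = c * aut_pow (tdeg \<alpha>) (p \<beta>)"
proof -
  have "(\<lambda>i. \<alpha> i + \<beta> i - \<alpha> i) = \<beta>"
    by simp
  then show ?thesis
    using assms by (simp add: pmul_monomial_left exps_add le_fun_def)
qed

lemma support_pmul_monomial_left:
  "{\<gamma>. pmul (monomial c \<alpha>) p \<gamma> \<noteq> 0} \<subseteq> (\<lambda>\<beta> i. \<alpha> i + \<beta> i) ` {\<beta>. p \<beta> \<noteq> 0}"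
proof
  fix \<gamma> assume "\<gamma> \<in> {\<gamma>. pmul (monomial c \<alpha>) p \<gamma> \<noteq> 0}"
  then have "\<alpha> \<le> \<gamma>" "p (\<lambda>i. \<gamma> i - \<alpha> i) \<noteq> 0"
    by (auto simp: pmul_monomial_left ring_endo_zero[OF aut_pow_ring_endo] split: if_splits)
  moreover from \<open>\<alpha> \<le> \<gamma>\<close> have "\<gamma> = (\<lambda>i. \<alpha> i + (\<gamma> i - \<alpha> i))"
    by (auto simp: le_fun_def)
  ultimately show "\<gamma> \<in> (\<lambda>\<beta> i. \<alpha> i + \<beta> i) ` {\<beta>. p \<beta> \<noteq> 0}"
    by (intro image_eqI[where x = "\<lambda>i. \<gamma> i - \<alpha> i"]) auto
qed

lemma laurent_coeff_pmul_monomial: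
  assumes "\<alpha> \<in> exps 2" "p \<in> polys"
  shows "laurent_coeff (pmul (monomial c \<alpha>) p) k = c * aut_pow (tdeg \<alpha>) (laurent_coeff p (k - tdeg \<alpha>))"
proof -
  define S where "S = {\<beta>. p \<beta> \<noteq> 0}"
  define T where "T = {\<beta> \<in> S. tdeg \<beta> = k - tdeg \<alpha>}"
  define shift where "shift \<beta> = (\<lambda>i. \<alpha> i + \<beta> i)" for \<beta> :: "nat \<Rightarrow> nat"
  have "inj shift"
    by (auto simp: inj_def shift_def fun_eq_iff)
  then have inj: "inj_on shift T"
    by (rule inj_on_subset) simp
  have "finite S"
    using assms(2) by (simp add: S_def polys_finite_support)
  then have "laurent_coeff (pmul (monomial c \<alpha>) p) k =
      (\<Sum>\<gamma> | \<gamma> \<in> shift ` S \<and> tdeg \<gamma> = k. pmul (monomial c \<alpha>) p \<gamma>)"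
    using support_pmul_monomial_left unfolding S_def shift_def by (intro laurent_coeff_eq_sum) simp_all
  also have "{\<gamma>. \<gamma> \<in> shift ` S \<and> tdeg \<gamma> = k} = shift ` T"
    by (auto simp: T_def shift_def tdeg_add)
  also have "(\<Sum>\<gamma> \<in> shift ` T. pmul (monomial c \<alpha>) p \<gamma>) = (\<Sum>\<beta>\<in>T. pmul (monomial c \<alpha>) p (shift \<beta>))"
    by (rule sum.reindex[OF inj, unfolded comp_def])
  also have "\<dots> = (\<Sum>\<beta>\<in>T. c * aut_pow (tdeg \<alpha>) (p \<beta>))"
    using assms by (intro sum.cong refl)
      (simp add: shift_def pmul_monomial_left_shift T_def S_def polys_support_exps)
  also have "\<dots> = c * aut_pow (tdeg \<alpha>) (laurent_coeff p (k - tdeg \<alpha>))"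
    by (simp add: laurent_coeff_def T_def S_def ring_endo_sum[OF aut_pow_ring_endo] sum_distrib_left)
  finally show ?thesis .
qed

lemma laurent_coeff_pmul:
  assumes p: "p \<in> polys" and q: "q \<in> polys"
  shows "laurent_coeff (pmul p q) k =
    (\<Sum>j \<in> tdeg_support p. laurent_coeff p j * aut_pow j (laurent_coeff q (k - j)))"
proof -
  define S where "S = {\<alpha>. p \<alpha> \<noteq> 0}"
  have S: "finite S"
    using p by (simp add: S_def polys_finite_support)
  have monomials: "pmul (monomial (p \<alpha>) \<alpha>) q \<in> polys" if "\<alpha> \<in> S" for \<alpha>
    using that p q by (auto simp: S_def intro: polys_pmul monomial_in_polys polys_support_exps)
  have "pmul p q = (\<lambda>\<gamma>. \<Sum>\<alpha>\<in>S. pmul (monomial (p \<alpha>) \<alpha>) q \<gamma>)"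
    using sum_monomials[OF p] pmul_sum_left by (metis S_def)
  then have "laurent_coeff (pmul p q) k = (\<Sum>\<alpha>\<in>S. laurent_coeff (pmul (monomial (p \<alpha>) \<alpha>) q) k)"
    by (simp add: laurent_coeff_sum[OF S] monomials)
  also have "\<dots> = (\<Sum>\<alpha>\<in>S. p \<alpha> * aut_pow (tdeg \<alpha>) (laurent_coeff q (k - tdeg \<alpha>)))"
    using p q by (intro sum.cong refl) (simp add: laurent_coeff_pmul_monomial S_def polys_support_exps)
  also have "\<dots> = (\<Sum>j \<in> tdeg ` S. \<Sum>\<alpha> | \<alpha> \<in> S \<and> tdeg \<alpha> = j. p \<alpha> * aut_pow j (laurent_coeff q (k - j)))"
    by (subst sum.image_gen[OF S, where g = tdeg]) (auto intro!: sum.cong)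
  also have "\<dots> = (\<Sum>j \<in> tdeg_support p. laurent_coeff p j * aut_pow j (laurent_coeff q (k - j)))"
    by (simp add: tdeg_support_def laurent_coeff_def S_def sum_distrib_right)
  finally show ?thesis .
qed

lemma laurent_kernel_ideal: "ideal laurent_kernel skew_ring"
proof -
  interpret R: ring skew_ring
    by (rule skew_ring_is_ring)
  have uminus: "\<ominus>\<^bsub>skew_ring\<^esub> p = (\<lambda>\<alpha>. - p \<alpha>)" if "p \<in> polys" for p
    using that by (intro R.minus_equality) (simp_all add: skew_ring_carrier skew_ring_simps polys_uminus)
  show ?thesis
  proof (rule idealI[OF skew_ring_is_ring])
    show "subgroup laurent_kernel (add_monoid skew_ring)"
      by (rule R.add.subgroupI) (auto simp: laurent_kernel_def skew_ring_carrier skew_ring_simps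
          uminus polys_uminus polys_add laurent_coeff_uminus laurent_coeff_add intro: zero_in_polys)
  next
    fix p q :: "(nat \<Rightarrow> nat) \<Rightarrow> 'a"
    assume "p \<in> laurent_kernel" "q \<in> carrier skew_ring"
    then show "q \<otimes>\<^bsub>skew_ring\<^esub> p \<in> laurent_kernel" "p \<otimes>\<^bsub>skew_ring\<^esub> q \<in> laurent_kernel"
      by (simp_all add: laurent_kernel_def skew_ring_carrier skew_ring_simps polys_pmul laurent_coeff_pmul
          ring_endo_zero[OF aut_pow_ring_endo])
  qed
qed

lemma laurent_kernel_proper: "laurent_kernel \<noteq> carrier skew_ring"
proof -
  have "laurent_coeff (monomial 1 (\<lambda>_. 0)) 0 \<noteq> (0::'a)"
    by (simp add: laurent_coeff_monomial)
  then have "\<one>\<^bsub>skew_ring\<^esub> \<notin> laurent_kernel"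
    by (auto simp: laurent_kernel_def skew_ring_simps)
  then show ?thesis
    using ring.ring_simprules(6)[OF skew_ring_is_ring] by blast
qed

abbreviation laurent_ring :: "((nat \<Rightarrow> nat) \<Rightarrow> 'a) set ring" where
  "laurent_ring \<equiv> skew_ring Quot laurent_kernel"

abbreviation proj :: "((nat \<Rightarrow> nat) \<Rightarrow> 'a) \<Rightarrow> ((nat \<Rightarrow> nat) \<Rightarrow> 'a) set" where
  "proj p \<equiv> laurent_kernel +>\<^bsub>skew_ring\<^esub> p"

lemma laurent_ring_is_ring: "ring laurent_ring"
  by (rule ideal.quotient_is_ring[OF laurent_kernel_ideal])

lemma laurent_ring_carrier: "carrier laurent_ring = proj ` polys"
  by (auto simp: FactRing_def A_RCOSETS_def RCOSETS_def a_r_coset_def skew_ring_carrier)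

lemma proj_in_carrier: "p \<in> polys \<Longrightarrow> proj p \<in> carrier laurent_ring"
  by (simp add: laurent_ring_carrier)

lemma proj_mult: "p \<in> polys \<Longrightarrow> q \<in> polys \<Longrightarrow> proj p \<otimes>\<^bsub>laurent_ring\<^esub> proj q = proj (pmul p q)"
  using ideal.rcoset_mult_add[OF laurent_kernel_ideal, of p q]
  by (simp add: FactRing_def skew_ring_carrier skew_ring_simps)

lemma proj_add:
  "p \<in> polys \<Longrightarrow> q \<in> polys \<Longrightarrow> proj p \<oplus>\<^bsub>laurent_ring\<^esub> proj q = proj (\<lambda>\<alpha>. p \<alpha> + q \<alpha>)"
  using ideal.a_rcos_sum[OF laurent_kernel_ideal, of p q]
  by (simp add: FactRing_def skew_ring_carrier skew_ring_simps)

lemma laurent_ring_one: "\<one>\<^bsub>laurent_ring\<^esub> = proj (monomial 1 (\<lambda>_. 0))"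
  by (simp add: FactRing_def skew_ring_simps)

lemma laurent_ring_zero: "\<zero>\<^bsub>laurent_ring\<^esub> = proj (\<lambda>_. 0)"
proof -
  interpret I: ideal laurent_kernel skew_ring
    by (rule laurent_kernel_ideal)
  have "(\<lambda>_. 0) \<in> (laurent_kernel :: ((nat \<Rightarrow> nat) \<Rightarrow> 'a) set)"
    by (simp add: laurent_kernel_def zero_in_polys)
  then show ?thesis
    using I.a_rcos_const by (simp add: FactRing_def)
qed

lemma proj_uminus: "p \<in> polys \<Longrightarrow> \<ominus>\<^bsub>laurent_ring\<^esub> proj p = proj (\<lambda>\<alpha>. - p \<alpha>)"
proof -
  assume p: "p \<in> polys"
  interpret S: ring laurent_ring
    by (rule laurent_ring_is_ring)
  show ?thesis
    using p by (intro S.minus_equality) (simp_all add: proj_add polys_uminus proj_in_carrier laurent_ring_zero)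
qed

lemma proj_eq_iff:
  assumes p: "p \<in> polys" and q: "q \<in> polys"
  shows "proj p = proj q \<longleftrightarrow> (\<forall>k. laurent_coeff p k = laurent_coeff q k)"
proof -
  interpret R: ring skew_ring
    by (rule skew_ring_is_ring)
  interpret I: ideal laurent_kernel skew_ring
    by (rule laurent_kernel_ideal)
  have carrier: "p \<in> carrier skew_ring" "q \<in> carrier skew_ring"
    using p q by (simp_all add: skew_ring_carrier)
  have "p \<ominus>\<^bsub>skew_ring\<^esub> q = (\<lambda>\<alpha>. p \<alpha> + - q \<alpha>)"
    using R.minus_equality[of "\<lambda>\<alpha>. - q \<alpha>" q] q
    by (simp add: a_minus_def skew_ring_carrier skew_ring_simps polys_uminus)
  moreover have "(\<lambda>\<alpha>. p \<alpha> + - q \<alpha>) \<in> polys"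
    using p q by (intro polys_add polys_uminus)
  moreover have "laurent_coeff (\<lambda>\<alpha>. p \<alpha> + - q \<alpha>) k = laurent_coeff p k - laurent_coeff q k" for k
    using laurent_coeff_add[OF p polys_uminus[OF q]] laurent_coeff_uminus[of q] by simp
  ultimately have "p \<ominus>\<^bsub>skew_ring\<^esub> q \<in> laurent_kernel \<longleftrightarrow> (\<forall>k. laurent_coeff p k = laurent_coeff q k)"
    by (simp add: laurent_kernel_def)
  moreover have "proj p = proj q \<longleftrightarrow> p \<in> proj q"
    using carrier I.a_rcos_self[of p] I.a_repr_independence'[of p q] by auto
  ultimately show ?thesis
    using I.a_rcos_module_minus[OF R.ring_axioms carrier(2,1)] by simp
qed

definition laurent_monom :: "'a \<Rightarrow> int \<Rightarrow> ((nat \<Rightarrow> nat) \<Rightarrow> 'a) set" where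
  "laurent_monom c d = proj (monomial c (exp_of_tdeg d))"

lemma laurent_monom_in_carrier: "laurent_monom c d \<in> carrier laurent_ring"
  by (simp add: laurent_monom_def proj_in_carrier monomial_in_polys exp_of_tdeg_in_exps)

lemma proj_monomial: "\<alpha> \<in> exps 2 \<Longrightarrow> proj (monomial c \<alpha>) = laurent_monom c (tdeg \<alpha>)"
  by (simp add: laurent_monom_def proj_eq_iff monomial_in_polys exp_of_tdeg_in_exps laurent_coeff_monomial)

lemma laurent_monom_mult:
  "laurent_monom c d \<otimes>\<^bsub>laurent_ring\<^esub> laurent_monom c' d' = laurent_monom (c * aut_pow d c') (d + d')"
proof -
  let ?\<alpha> = "exp_of_tdeg d" and ?\<beta> = "exp_of_tdeg d'"
  have "laurent_monom c d \<otimes>\<^bsub>laurent_ring\<^esub> laurent_monom c' d' = proj (pmul (monomial c ?\<alpha>) (monomial c' ?\<beta>))"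
    by (simp add: laurent_monom_def proj_mult monomial_in_polys exp_of_tdeg_in_exps)
  also have "\<dots> = proj (monomial (c * aut_pow d c') (\<lambda>i. ?\<alpha> i + ?\<beta> i))"
    by (simp add: pmul_monomial_monomial exp_of_tdeg_in_exps)
  also have "\<dots> = laurent_monom (c * aut_pow d c') (d + d')"
    by (simp add: proj_monomial exps_add exp_of_tdeg_in_exps tdeg_add)
  finally show ?thesis .
qed

lemma laurent_monom_add:
  "laurent_monom c d \<oplus>\<^bsub>laurent_ring\<^esub> laurent_monom c' d = laurent_monom (c + c') d"
  by (simp add: laurent_monom_def proj_add proj_eq_iff monomial_in_polys exp_of_tdeg_in_exps polys_add
      laurent_coeff_add laurent_coeff_monomial)

lemma laurent_monom_0: "laurent_monom 0 d = \<zero>\<^bsub>laurent_ring\<^esub>"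
  by (simp add: laurent_monom_def laurent_ring_zero)

lemma laurent_ring_one_laurent_monom: "\<one>\<^bsub>laurent_ring\<^esub> = laurent_monom 1 0"
  by (simp add: laurent_ring_one proj_monomial zero_in_exps)

lemma proj_skew_const: "proj (skew_const c) = laurent_monom c 0"
  by (simp add: skew_const_eq_monomial proj_monomial zero_in_exps)

lemma laurent_monom_pow: "\<exists>c'. laurent_monom c d [^]\<^bsub>laurent_ring\<^esub> n = laurent_monom c' (int n * d)"
proof (induction n)
  case 0
  then show ?case
    using laurent_ring_one_laurent_monom by auto
next
  case (Suc n)
  then obtain c' where "laurent_monom c d [^]\<^bsub>laurent_ring\<^esub> n = laurent_monom c' (int n * d)"
    by blast
  then have "laurent_monom c d [^]\<^bsub>laurent_ring\<^esub> Suc n = laurent_monom (c' * aut_pow (int n * d) c) (int (Suc n) * d)"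
    by (simp add: laurent_monom_mult algebra_simps)
  then show ?case
    by blast
qed

lemma const_mult_laurent_monom:
  "proj (skew_const c) \<otimes>\<^bsub>laurent_ring\<^esub> laurent_monom x d = laurent_monom (c * x) d"
  by (simp add: proj_skew_const laurent_monom_mult aut_pow_0)

lemma monom_in_laurent_monom:
  assumes "\<forall>i<m. a i = laurent_monom (c i) (d i)"
  shows "\<exists>x. monom_in laurent_ring a m \<beta> = laurent_monom x (\<Sum>i<m. int (\<beta> i) * d i)"
proof -
  have "\<exists>x. foldr (\<lambda>i acc. a i [^]\<^bsub>laurent_ring\<^esub> \<beta> i \<otimes>\<^bsub>laurent_ring\<^esub> acc) xs \<one>\<^bsub>laurent_ring\<^esub> =
      laurent_monom x (\<Sum>i\<leftarrow>xs. int (\<beta> i) * d i)" if "set xs \<subseteq> {..<m}" for xs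
    using that
  proof (induction xs)
    case Nil
    then show ?case
      using laurent_ring_one_laurent_monom by auto
  next
    case (Cons j xs)
    then obtain x where x: "foldr (\<lambda>i acc. a i [^]\<^bsub>laurent_ring\<^esub> \<beta> i \<otimes>\<^bsub>laurent_ring\<^esub> acc) xs \<one>\<^bsub>laurent_ring\<^esub> =
        laurent_monom x (\<Sum>i\<leftarrow>xs. int (\<beta> i) * d i)"
      by auto
    obtain y where "a j [^]\<^bsub>laurent_ring\<^esub> \<beta> j = laurent_monom y (int (\<beta> j) * d j)"
      using laurent_monom_pow assms Cons.prems by fastforce
    with x show ?case
      by (auto simp: laurent_monom_mult)
  qed
  from this[of "[0..<m]"] show ?thesis
    by (simp add: monom_in_def sum_list_distinct_conv_sum_set atLeast0LessThan)
qed

lemma same_degree_monoms_not_left_alg_indep: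
  assumes "\<beta> \<in> exps m" "\<beta>' \<in> exps m" "\<beta> \<noteq> \<beta>'"
    and x: "monom_in laurent_ring a m \<beta> = laurent_monom x e"
    and y: "monom_in laurent_ring a m \<beta>' = laurent_monom y e"
  shows "\<not> left_alg_indep laurent_ring (\<lambda>d. proj (skew_const d)) m a"
proof
  interpret S: ring laurent_ring
    by (rule laurent_ring_is_ring)
  assume indep: "left_alg_indep laurent_ring (\<lambda>d. proj (skew_const d)) m a"
  have terms: "proj (skew_const c) \<otimes>\<^bsub>laurent_ring\<^esub> monom_in laurent_ring a m \<beta> = laurent_monom (c * x) e"
    "proj (skew_const c) \<otimes>\<^bsub>laurent_ring\<^esub> monom_in laurent_ring a m \<beta>' = laurent_monom (c * y) e" for c
    using x y by (simp_all add: const_mult_laurent_monom)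
  show False
  proof (cases "y = 0")
    case True
    have "finsum laurent_ring (\<lambda>\<gamma>. proj (skew_const 1) \<otimes>\<^bsub>laurent_ring\<^esub> monom_in laurent_ring a m \<gamma>)
        {\<beta>'} = laurent_monom (1 * y) e"
      by (simp add: S.finsum_insert terms laurent_monom_in_carrier)
    also have "\<dots> = \<zero>\<^bsub>laurent_ring\<^esub>"
      using True by (simp add: laurent_monom_0)
    finally show False
      using indep[unfolded left_alg_indep_def, rule_format, of "{\<beta>'}" "\<lambda>_. 1"] assms(2) by simp
  next
    case False
    define \<kappa> where "\<kappa> \<gamma> = (if \<gamma> = \<beta> then 1 else - (x * inverse y))" for \<gamma>
    have "finsum laurent_ring (\<lambda>\<gamma>. proj (skew_const (\<kappa> \<gamma>)) \<otimes>\<^bsub>laurent_ring\<^esub> monom_in laurent_ring a m \<gamma>)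
        {\<beta>, \<beta>'} = laurent_monom (\<kappa> \<beta> * x) e \<oplus>\<^bsub>laurent_ring\<^esub> laurent_monom (\<kappa> \<beta>' * y) e"
      using assms(3) by (simp add: S.finsum_insert terms laurent_monom_in_carrier)
    also have "\<dots> = \<zero>\<^bsub>laurent_ring\<^esub>"
      using False assms(3) by (simp add: \<kappa>_def laurent_monom_add laurent_monom_0 mult.assoc)
    finally have "\<kappa> \<beta> = 0"
      using indep[unfolded left_alg_indep_def, rule_format, of "{\<beta>, \<beta>'}" \<kappa>] assms(1,2) by simp
    then show False
      by (simp add: \<kappa>_def)
  qed
qed

lemma laurent_monoms_not_left_alg_indep:
  assumes "2 \<le> m" and a: "\<forall>i<m. a i = laurent_monom (c i) (d i)"
  shows "\<not> left_alg_indep laurent_ring (\<lambda>d. proj (skew_const d)) m a"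
proof -
  obtain u v u' v' :: nat
    where uv: "(u, v) \<noteq> (u', v')" "int u * d 0 + int v * d 1 = int u' * d 0 + int v' * d 1"
    by (rule nat_combinations_collide)
  define exp where "exp u v = (\<lambda>i::nat. if i = 0 then u else if i = 1 then v else 0)" for u v :: nat
  have exp_in: "exp u v \<in> exps m" for u v
    using assms(1) by (simp add: exp_def exps_def)
  have "(\<Sum>i<m. int (exp u v i) * d i) = int u * d 0 + int v * d 1" for u v
  proof -
    have "(\<Sum>i<m. int (exp u v i) * d i) = (\<Sum>i\<in>{0, 1}. int (exp u v i) * d i)"
      using assms(1) by (intro sum.mono_neutral_right) (auto simp: exp_def)
    then show ?thesis
      by (simp add: exp_def)
  qed
  then obtain x y e where "monom_in laurent_ring a m (exp u v) = laurent_monom x e"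
    and "monom_in laurent_ring a m (exp u' v') = laurent_monom y e"
    using monom_in_laurent_monom[OF a] uv(2) by metis
  moreover have "exp u v \<noteq> exp u' v'"
    using uv(1) by (auto simp: exp_def fun_eq_iff split: if_splits)
  ultimately show ?thesis
    using exp_in by (intro same_degree_monoms_not_left_alg_indep)
qed

definition degree_span :: "int set \<Rightarrow> ((nat \<Rightarrow> nat) \<Rightarrow> 'a) set set" where
  "degree_span K = {proj p | p. p \<in> polys \<and> tdeg_support p \<subseteq> K}"

lemma degree_spanI: "p \<in> polys \<Longrightarrow> tdeg_support p \<subseteq> K \<Longrightarrow> proj p \<in> degree_span K"
  unfolding degree_span_def by blast

lemma degree_spanE:
  assumes "x \<in> degree_span K"
  obtains p where "p \<in> polys" "tdeg_support p \<subseteq> K" "x = proj p"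
  using assms unfolding degree_span_def by blast

lemma degree_span_subset_carrier: "degree_span K \<subseteq> carrier laurent_ring"
  by (auto simp: proj_in_carrier elim: degree_spanE)

lemma degree_span_mono: "K \<subseteq> L \<Longrightarrow> degree_span K \<subseteq> degree_span L"
  by (auto simp: degree_span_def)

lemma laurent_monom_in_degree_span:
  assumes "d \<in> K"
  shows "laurent_monom c d \<in> degree_span K"
proof -
  have "tdeg_support (monomial c (exp_of_tdeg d)) \<subseteq> K"
    using assms by (auto simp: tdeg_support_def monomial_def)
  then show ?thesis
    unfolding laurent_monom_def by (intro degree_spanI monomial_in_polys exp_of_tdeg_in_exps)
qed

lemma zero_in_degree_span: "\<zero>\<^bsub>laurent_ring\<^esub> \<in> degree_span K"
  unfolding laurent_ring_zero by (rule degree_spanI) (simp_all add: zero_in_polys tdeg_support_def)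

lemma degree_span_add:
  assumes "x \<in> degree_span K" "y \<in> degree_span K"
  shows "x \<oplus>\<^bsub>laurent_ring\<^esub> y \<in> degree_span K"
proof -
  obtain p q where "p \<in> polys" "tdeg_support p \<subseteq> K" "x = proj p"
    and "q \<in> polys" "tdeg_support q \<subseteq> K" "y = proj q"
    using assms by (meson degree_spanE)
  moreover have "tdeg_support (\<lambda>\<alpha>. p \<alpha> + q \<alpha>) \<subseteq> tdeg_support p \<union> tdeg_support q"
    by (auto simp: tdeg_support_def)
  ultimately have "tdeg_support (\<lambda>\<alpha>. p \<alpha> + q \<alpha>) \<subseteq> K"
    by blast
  with \<open>p \<in> polys\<close> \<open>q \<in> polys\<close> \<open>x = proj p\<close> \<open>y = proj q\<close> show ?thesis
    by (simp add: proj_add degree_spanI polys_add)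
qed

lemma degree_span_uminus:
  assumes "x \<in> degree_span K"
  shows "\<ominus>\<^bsub>laurent_ring\<^esub> x \<in> degree_span K"
proof -
  obtain p where "p \<in> polys" "tdeg_support p \<subseteq> K" "x = proj p"
    using assms by (rule degree_spanE)
  moreover have "tdeg_support (\<lambda>\<alpha>. - p \<alpha>) = tdeg_support p"
    by (simp add: tdeg_support_def)
  ultimately show ?thesis
    by (simp add: proj_uminus degree_spanI polys_uminus)
qed

lemma degree_span_mult:
  assumes "x \<in> degree_span K" "y \<in> degree_span L"
  shows "x \<otimes>\<^bsub>laurent_ring\<^esub> y \<in> degree_span {j + k | j k. j \<in> K \<and> k \<in> L}"
proof -
  obtain p q where "p \<in> polys" "tdeg_support p \<subseteq> K" "x = proj p"
    and "q \<in> polys" "tdeg_support q \<subseteq> L" "y = proj q"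
    using assms by (meson degree_spanE)
  moreover from this have "tdeg_support (pmul p q) \<subseteq> {j + k | j k. j \<in> K \<and> k \<in> L}"
    using tdeg_support_pmul by blast
  ultimately show ?thesis
    by (simp add: proj_mult degree_spanI polys_pmul)
qed

lemma subring_degree_span:
  assumes "0 \<in> K" "\<And>j k. j \<in> K \<Longrightarrow> k \<in> K \<Longrightarrow> j + k \<in> K"
  shows "subring (degree_span K) laurent_ring"
proof (rule ring.subringI[OF laurent_ring_is_ring])
  show "\<one>\<^bsub>laurent_ring\<^esub> \<in> degree_span K"
    unfolding laurent_ring_one_laurent_monom using assms(1) by (rule laurent_monom_in_degree_span)
  have "{j + k | j k. j \<in> K \<and> k \<in> K} \<subseteq> K"
    using assms(2) by blast
  then show "x \<otimes>\<^bsub>laurent_ring\<^esub> y \<in> degree_span K" if "x \<in> degree_span K" "y \<in> degree_span K" for x y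
    by (rule subsetD[OF degree_span_mono degree_span_mult[OF that]])
qed (auto intro: subsetD[OF degree_span_subset_carrier] degree_span_add degree_span_uminus)

lemma laurent_monom_notin_degree_span:
  assumes "c \<noteq> 0" "d \<notin> K"
  shows "laurent_monom c d \<notin> degree_span K"
proof
  assume "laurent_monom c d \<in> degree_span K"
  then obtain p where p: "p \<in> polys" "tdeg_support p \<subseteq> K" "laurent_monom c d = proj p"
    by (rule degree_spanE)
  then have "laurent_coeff p d = c"
    by (simp add: laurent_monom_def proj_eq_iff monomial_in_polys exp_of_tdeg_in_exps
        laurent_coeff_monomial) (drule spec[of _ d], simp)
  moreover have "laurent_coeff p d = 0"
    using p(2) assms(2) by (intro laurent_coeff_eq_0) blast
  ultimately show False
    using assms(1) by simp
qed

lemma generate_ring_in_degree_span: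
  assumes "\<forall>i<m. a i = laurent_monom (c i) e"
  shows "generate_ring laurent_ring (range (\<lambda>d. proj (skew_const d)) \<union> a ` {..<m})
    \<subseteq> degree_span (range (\<lambda>j::nat. int j * e))"
proof (rule ring.generate_ring_min_subring1[OF laurent_ring_is_ring])
  have "0 \<in> range (\<lambda>j::nat. int j * e)" "e \<in> range (\<lambda>j::nat. int j * e)"
    using rangeI[of "\<lambda>j::nat. int j * e" 0] rangeI[of "\<lambda>j::nat. int j * e" 1] by simp_all
  then have "laurent_monom b 0 \<in> degree_span (range (\<lambda>j::nat. int j * e))"
    "laurent_monom b e \<in> degree_span (range (\<lambda>j::nat. int j * e))" for b
    by (simp_all add: laurent_monom_in_degree_span)
  then show generators: "range (\<lambda>d. proj (skew_const d)) \<union> a ` {..<m}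
      \<subseteq> degree_span (range (\<lambda>j::nat. int j * e))"
    using assms by (auto simp: proj_skew_const)
  show "range (\<lambda>d. proj (skew_const d)) \<union> a ` {..<m} \<subseteq> carrier laurent_ring"
    using subset_trans[OF generators degree_span_subset_carrier] .
  show "subring (degree_span (range (\<lambda>j::nat. int j * e))) laurent_ring"
  proof (rule subring_degree_span)
    fix j k assume "j \<in> range (\<lambda>j::nat. int j * e)" "k \<in> range (\<lambda>j::nat. int j * e)"
    then obtain u v where "j = int u * e" "k = int v * e"
      by blast
    then have "j + k = int (u + v) * e"
      by (simp add: distrib_right)
    then show "j + k \<in> range (\<lambda>j::nat. int j * e)"
      by blast
  next
    show "0 \<in> range (\<lambda>j::nat. int j * e)"
      using rangeI[of "\<lambda>j::nat. int j * e" 0] by simp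
  qed
qed

lemma finite_subset_degree_span:
  assumes "finite G" "G \<subseteq> carrier laurent_ring"
  obtains N where "\<And>g. g \<in> G \<Longrightarrow> g \<in> degree_span {- N..N}"
proof -
  have "\<forall>g\<in>G. \<exists>q. q \<in> polys \<and> g = proj q"
    using assms(2) by (auto simp: laurent_ring_carrier)
  then obtain Q where Q: "\<forall>g\<in>G. Q g \<in> polys \<and> g = proj (Q g)"
    by (rule bchoice[THEN exE])
  define N where "N = Max (insert 0 (abs ` (\<Union>g\<in>G. tdeg_support (Q g))))"
  have "finite (\<Union>g\<in>G. tdeg_support (Q g))"
    using assms(1) Q by (auto simp: tdeg_support_def polys_finite_support)
  then have bound: "\<bar>j\<bar> \<le> N" if "g \<in> G" "j \<in> tdeg_support (Q g)" for g j
    unfolding N_def using that by (intro Max_ge) auto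
  have "g \<in> degree_span {- N..N}" if "g \<in> G" for g
  proof -
    have "tdeg_support (Q g) \<subseteq> {- N..N}"
      using bound[OF that] by (force simp: abs_le_iff)
    moreover have "Q g \<in> polys" "proj (Q g) = g"
      using Q that by auto
    ultimately show ?thesis
      using degree_spanI[of "Q g" "{- N..N}"] by simp
  qed
  then show ?thesis
    by (rule that)
qed

lemma not_fin_gen_over_degree_span:
  "\<not> fin_gen_left_module laurent_ring (degree_span (range (\<lambda>j::nat. int j * e)))"
proof
  interpret S: ring laurent_ring
    by (rule laurent_ring_is_ring)
  let ?A = "degree_span (range (\<lambda>j::nat. int j * e))"
  assume "fin_gen_left_module laurent_ring ?A"
  then obtain G where G: "finite G" "G \<subseteq> carrier laurent_ring"
    and span: "\<forall>s\<in>carrier laurent_ring. \<exists>c. (\<forall>g\<in>G. c g \<in> ?A) \<and>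
      s = finsum laurent_ring (\<lambda>g. c g \<otimes>\<^bsub>laurent_ring\<^esub> g) G"
    unfolding fin_gen_left_module_def by blast
  obtain N where generators: "\<And>g. g \<in> G \<Longrightarrow> g \<in> degree_span {- N..N}"
    using finite_subset_degree_span[OF G] by blast
  define K where "K = {j + i | j i. j \<in> range (\<lambda>j::nat. int j * e) \<and> i \<in> {- N..N}}"
  obtain k where "k \<notin> K"
    unfolding K_def by (rule nat_multiples_plus_interval_miss)
  obtain c where c: "\<forall>g\<in>G. c g \<in> ?A"
    and k_span: "laurent_monom 1 k = finsum laurent_ring (\<lambda>g. c g \<otimes>\<^bsub>laurent_ring\<^esub> g) G"
    using span laurent_monom_in_carrier by blast
  have "finsum laurent_ring (\<lambda>g. c g \<otimes>\<^bsub>laurent_ring\<^esub> g) G \<in> degree_span K"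
  proof (rule S.finsum_closed_subset[OF G(1)])
    show "(\<lambda>g. c g \<otimes>\<^bsub>laurent_ring\<^esub> g) \<in> G \<rightarrow> degree_span K"
    proof
      fix g assume "g \<in> G"
      then show "c g \<otimes>\<^bsub>laurent_ring\<^esub> g \<in> degree_span K"
        unfolding K_def using c generators by (intro degree_span_mult) auto
    qed
  qed (simp_all add: degree_span_subset_carrier zero_in_degree_span degree_span_add)
  with k_span \<open>k \<notin> K\<close> show False
    using laurent_monom_notin_degree_span[of 1 k K] by simp
qed

section \<open>Automorphic elements\<close>

lemma laurent_coeff_pmul_const_left:
  "p \<in> polys \<Longrightarrow> laurent_coeff (pmul (monomial c (\<lambda>_. 0)) p) k = c * laurent_coeff p k"
  by (simp add: laurent_coeff_pmul_monomial zero_in_exps aut_pow_0)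

lemma laurent_coeff_pmul_const_right:
  assumes "p \<in> polys"
  shows "laurent_coeff (pmul p (monomial c (\<lambda>_. 0))) k = laurent_coeff p k * aut_pow k c"
proof -
  have "finite (tdeg_support p)"
    using assms by (simp add: tdeg_support_def polys_finite_support)
  moreover have "laurent_coeff p k = 0" if "k \<notin> tdeg_support p"
    using that by (rule laurent_coeff_eq_0)
  ultimately show ?thesis
    using assms by (simp add: laurent_coeff_pmul monomial_in_polys zero_in_exps laurent_coeff_monomial
        ring_endo_zero[OF aut_pow_ring_endo] if_distrib cong: if_cong)
qed

lemma twisted_pair_imp_inner:
  assumes x: "\<forall>b. x * aut_pow k b = \<tau> b * x" "x \<noteq> 0"
    and y: "\<forall>b. y * aut_pow k' b = \<tau> b * y" "y \<noteq> 0"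
    and "k < k'"
  shows "inner_aut (\<sigma> ^^ nat (k' - k))"
proof -
  define n where "n = nat (k' - k)"
  define c where "c = inverse y * x"
  have "c \<noteq> 0" and inverse_c: "inverse c = inverse x * y"
    using x(2) y(2) by (simp_all add: c_def nonzero_inverse_mult_distrib)
  have "(\<sigma> ^^ n) z = c * z * inverse c" for z
  proof -
    define b where "b = aut_pow (- k) z"
    have "aut_pow k b = z"
      using fun_cong[OF aut_pow_add[of k "- k"], of z] by (simp add: b_def aut_pow_0)
    moreover have "int n + k = k'"
      using \<open>k < k'\<close> by (simp add: n_def)
    then have "aut_pow k' b = (\<sigma> ^^ n) z"
      using fun_cong[OF aut_pow_add[of "int n" k], of b] \<open>aut_pow k b = z\<close> by (simp add: aut_pow_of_nat)
    ultimately have "y * (\<sigma> ^^ n) z = x * z * inverse x * y"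
      using x y by (metis mult.assoc right_inverse mult_1_right)
    then have "(\<sigma> ^^ n) z = inverse y * (x * z * inverse x * y)"
      using y(2) by (metis mult.assoc left_inverse mult_1_left)
    then show ?thesis
      unfolding inverse_c by (simp add: c_def mult.assoc)
  qed
  with \<open>c \<noteq> 0\<close> show ?thesis
    unfolding inner_aut_def n_def by blast
qed

end

locale ring_automorphism_of_infinite_inner_order = ring_automorphism +
  assumes infinite_inner: "infinite_inner_order \<sigma>"
begin

lemma power_not_inner: "k < k' \<Longrightarrow> \<not> inner_aut (\<sigma> ^^ nat (k' - k))"
  using infinite_inner by (simp add: infinite_inner_order_def)

lemma twisted_coeffs_single_degree:
  assumes twisted: "\<forall>k b. f k * aut_pow k b = \<tau> b * f k"
  shows "\<exists>c d. \<forall>k. f k = (if k = d then c else 0)"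
proof (cases "\<exists>d. f d \<noteq> 0")
  case True
  then obtain d where d: "f d \<noteq> 0" by blast
  have "f k = 0" if "k \<noteq> d" for k
  proof (rule ccontr)
    assume k: "f k \<noteq> 0"
    show False
    proof (cases "k < d")
      case True
      then show False
        using twisted_pair_imp_inner[of "f k" k \<tau> "f d" d] twisted k d power_not_inner by blast
    next
      case False
      with \<open>k \<noteq> d\<close> have "d < k" by simp
      then show False
        using twisted_pair_imp_inner[of "f d" d \<tau> "f k" k] twisted k d power_not_inner by blast
    qed
  qed
  then show ?thesis
    by (intro exI[of _ "f d"] exI[of _ d]) auto
qed auto

lemma automorphic_imp_laurent_monom:
  assumes "Z \<in> carrier laurent_ring" "automorphic_over laurent_ring (\<lambda>d. proj (skew_const d)) Z \<tau>"
  shows "\<exists>c d. Z = laurent_monom c d"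
proof -
  obtain p where p: "p \<in> polys" "Z = proj p"
    using assms(1) by (auto simp: laurent_ring_carrier)
  have const: "monomial b (\<lambda>_. 0) \<in> polys" for b :: 'a
    by (simp add: monomial_in_polys zero_in_exps)
  have "proj (pmul p (monomial b (\<lambda>_. 0))) = proj (pmul (monomial (\<tau> b) (\<lambda>_. 0)) p)" for b
    using assms(2) p const by (simp add: automorphic_over_def skew_const_eq_monomial proj_mult)
  then have "laurent_coeff p k * aut_pow k b = \<tau> b * laurent_coeff p k" for k b
    using p(1) const by (simp add: proj_eq_iff polys_pmul laurent_coeff_pmul_const_left
        laurent_coeff_pmul_const_right)
  then obtain c d where "\<forall>k. laurent_coeff p k = (if k = d then c else 0)"
    using twisted_coeffs_single_degree by blast
  then have "proj p = laurent_monom c d"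
    using p(1) by (simp add: laurent_monom_def proj_eq_iff monomial_in_polys exp_of_tdeg_in_exps
        laurent_coeff_monomial eq_commute)
  with p(2) show ?thesis
    by blast
qed

lemma laurent_ring_not_aut_normalizable:
  "\<not> aut_normalizable laurent_ring (\<lambda>d. proj (skew_const d))"
proof
  assume "aut_normalizable laurent_ring (\<lambda>d. proj (skew_const d))"
  then obtain m a \<tau> where
    carrier: "\<forall>i<m. a i \<in> carrier laurent_ring" and
    automorphic: "\<forall>i<m. automorphic_over laurent_ring (\<lambda>d. proj (skew_const d)) (a i) (\<tau> i)" and
    indep: "left_alg_indep laurent_ring (\<lambda>d. proj (skew_const d)) m a" and
    fin_gen: "fin_gen_left_module laurent_ring
      (generate_ring laurent_ring (range (\<lambda>d. proj (skew_const d)) \<union> a ` {..<m}))"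
    unfolding aut_normalizable_def by blast
  have "\<forall>i. \<exists>c d. i < m \<longrightarrow> a i = laurent_monom c d"
    using carrier automorphic automorphic_imp_laurent_monom by blast
  then obtain c d where monoms: "\<forall>i<m. a i = laurent_monom (c i) (d i)"
    by metis
  show False
  proof (cases "2 \<le> m")
    case True
    with monoms indep show False
      using laurent_monoms_not_left_alg_indep by blast
  next
    case False
    have "a i = laurent_monom (c i) (d 0)" if "i < m" for i
    proof -
      from that False have "i = 0" by linarith
      with monoms that show ?thesis by simp
    qed
    then show False
      using fin_gen_left_module_mono[OF generate_ring_in_degree_span fin_gen] not_fin_gen_over_degree_span
      by blast
  qed
qed

end

theorem proposition5p7:
  fixes \<sigma> :: "'a::division_ring \<Rightarrow> 'a"
  assumes "ring_aut \<sigma>"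
    and "infinite_inner_order \<sigma>"
  shows "\<not> tuple_aut_normalizable [\<sigma>, inv_into UNIV \<sigma>]"
proof
  interpret ring_automorphism_of_infinite_inner_order \<sigma>
    using assms by unfold_locales
  assume "tuple_aut_normalizable [\<sigma>, inv_into UNIV \<sigma>]"
  then have "aut_normalizable laurent_ring (\<lambda>d. proj (skew_const d))"
    unfolding tuple_aut_normalizable_def using laurent_kernel_ideal laurent_kernel_proper by blast
  with laurent_ring_not_aut_normalizable show False ..
qed

end
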